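(* Let $f:\mathcal{Y}\to\mathbb{R}$ be measurable with $f(X)$ bounded, and $d\ge2$. Then pointwise \[ \big|\mathfrak{h}^+\,|\mathfrak{h}^{(d-1)}f(X)|_{\mathrm{op}}\big|\le|\mathfrak{h}^{(d)}f(X)|_{\mathrm{op}}. \]
   Context: $X=(X_1,\dots,X_n)$ is a random vector in $\mathcal{Y}=\mathcal{X}_1\times\cdots\times\mathcal{X}_n$ and $X'$ an independent copy. $T_iF(X)$ is $F(X)$ with $X_i$ replaced by $X_i'$, $T_{i_1\dots i_k}=T_{i_1}\circ\cdots\circ T_{i_k}$. For distinct $i_1,\dots,i_k$, $\mathfrak{h}_{i_1\dots i_k}f(X)=\|\prod_{s=1}^k(\mathrm{Id}-T_{i_s})f(X)\|_{i_1,\dots,i_k,\infty}$ ($L^\infty$-norm with respect to $X_{i_1},\dots,X_{i_k},X'_{i_1},\dots,X'_{i_k}$); $\mathfrak{h}^{(k)}f$ is the $k$-tensor with these entries on distinct indices and $0$ elsewhere; $|A|_{\mathrm{op}}=\sup_{|v^j|\le1}\sum v^1_{i_1}\cdots v^k_{i_k}A_{i_1\dots i_k}$. For a bounded function $G=G(X)$, $\mathfrak{h}_i^+G(X)=\|(G(X)-T_iG(X))_+\|_{X_i',\infty}$ ($L^\infty$-norm w.r.t. $X_i'$ only) and $|\mathfrak{h}^+G|=(\sum_{i=1}^n(\mathfrak{h}_i^+G)^2)^{1/2}$. *)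

theory Defs
  imports "HOL-Probability.Probability"
begin

text \<open>Coordinates are indexed by 0..n-1; all X_i take values in a common type 'a,
  X_i has law M i, and X has law PiM {..<n} M (independent coordinates).\<close>

definition repl :: "nat set \<Rightarrow> (nat \<Rightarrow> 'a) \<Rightarrow> (nat \<Rightarrow> 'a) \<Rightarrow> nat \<Rightarrow> 'a" where
  "repl A x y = (\<lambda>j. if j \<in> A then y j else x j)"

text \<open>prod_{i in I} (Id - T_i) f, evaluated at (x, x').\<close>
definition diff_op :: "nat set \<Rightarrow> ((nat \<Rightarrow> 'a) \<Rightarrow> real) \<Rightarrow> (nat \<Rightarrow> 'a) \<Rightarrow> (nat \<Rightarrow> 'a) \<Rightarrow> real" where
  "diff_op I f x y = (\<Sum>A\<in>Pow I. (-1) ^ card A * f (repl A x y))"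

definition Linf :: "'b measure \<Rightarrow> ('b \<Rightarrow> real) \<Rightarrow> real" where
  "Linf N g = real_of_ereal (esssup N (\<lambda>z. ereal \<bar>g z\<bar>))"

text \<open>h_I f (x): L-infinity norm w.r.t. (X_i, X'_i), i in I, the other coordinates fixed by x.\<close>
definition hdiff :: "(nat \<Rightarrow> 'a measure) \<Rightarrow> nat set \<Rightarrow> ((nat \<Rightarrow> 'a) \<Rightarrow> real) \<Rightarrow> (nat \<Rightarrow> 'a) \<Rightarrow> real" where
  "hdiff M I f x = Linf (PiM I (\<lambda>i. M i \<Otimes>\<^sub>M M i))
     (\<lambda>z. diff_op I f (repl I x (\<lambda>j. fst (z j))) (\<lambda>j. snd (z j)))"

text \<open>The k-tensor h^(k) f (x), indexed by maps {..<k} -> {..<n}; zero off distinct indices.\<close>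
definition htensor :: "(nat \<Rightarrow> 'a measure) \<Rightarrow> nat \<Rightarrow> ((nat \<Rightarrow> 'a) \<Rightarrow> real) \<Rightarrow> (nat \<Rightarrow> 'a) \<Rightarrow> (nat \<Rightarrow> nat) \<Rightarrow> real" where
  "htensor M k f x \<iota> = (if inj_on \<iota> {..<k} then hdiff M (\<iota> ` {..<k}) f x else 0)"

definition opnorm :: "nat \<Rightarrow> nat \<Rightarrow> ((nat \<Rightarrow> nat) \<Rightarrow> real) \<Rightarrow> real" where
  "opnorm n k A = Sup {(\<Sum>\<iota>\<in>PiE {..<k} (\<lambda>_. {..<n}). (\<Prod>j<k. v j (\<iota> j)) * A \<iota>) | v.
       \<forall>j<k. (\<Sum>i<n. (v j i)\<^sup>2) \<le> 1}"

definition hplus :: "(nat \<Rightarrow> 'a measure) \<Rightarrow> nat \<Rightarrow> ((nat \<Rightarrow> 'a) \<Rightarrow> real) \<Rightarrow> (nat \<Rightarrow> 'a) \<Rightarrow> real" where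
  "hplus M i G x = Linf (M i) (\<lambda>y. max 0 (G x - G (x(i := y))))"

definition hplus_norm :: "(nat \<Rightarrow> 'a measure) \<Rightarrow> nat \<Rightarrow> ((nat \<Rightarrow> 'a) \<Rightarrow> real) \<Rightarrow> (nat \<Rightarrow> 'a) \<Rightarrow> real" where
  "hplus_norm M n G x = sqrt (\<Sum>i<n. (hplus M i G x)\<^sup>2)"

end

theory Submission
  imports Defs
begin

text \<open>Resampling X_i changes the difference h_J f (J not containing i) by at most h_{J+i} f:
  applying Id - T_i to the J-difference gives the (J+i)-difference, whose sup over fresh copies is
  h_{J+i} f, and the bound persists when the fresh copy X_i is replaced by the observed X_i because
  both have the same law. Entrywise, the decrease of the tensor h^(d-1) f under T_i is thus dominated
  by the slice of h^(d) f with last index i. Testing |h^(d-1) f|_op against nonnegative near-optimal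
  unit vectors w bounds h_i^+ by the contraction of that slice against w, and the Euclidean norm over i
  of these contractions is a value of the d-linear form of h^(d) f, hence at most |h^(d) f|_op.\<close>

section \<open>Essential suprema\<close>

lemma Linf_le:
  assumes "0 \<le> c" "AE z in N. \<bar>g z\<bar> \<le> c"
  shows "Linf N g \<le> c"
proof (cases "(\<lambda>z. ereal \<bar>g z\<bar>) \<in> borel_measurable N")
  case True
  have "esssup N (\<lambda>z. ereal \<bar>g z\<bar>) \<le> ereal c"
    using assms(2) by (intro esssup_I[OF True]) auto
  then show ?thesis using assms(1) unfolding Linf_def
    by (cases "esssup N (\<lambda>z. ereal \<bar>g z\<bar>)") auto
next
  case False
  then show ?thesis using assms(1) unfolding Linf_def by (simp add: esssup_non_measurable top_ereal_def)
qed

lemma Linf_nonneg: "0 \<le> Linf N g"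
proof (cases "(\<lambda>z. ereal \<bar>g z\<bar>) \<in> borel_measurable N \<and> emeasure N (space N) \<noteq> 0")
  case True
  then have "esssup N (\<lambda>_. 0) \<le> esssup N (\<lambda>z. ereal \<bar>g z\<bar>)"
    by (intro esssup_mono) auto
  then have "0 \<le> esssup N (\<lambda>z. ereal \<bar>g z\<bar>)"
    using True by (simp add: esssup_const)
  then show ?thesis unfolding Linf_def
    by (cases "esssup N (\<lambda>z. ereal \<bar>g z\<bar>)") auto
next
  case False
  then show ?thesis unfolding Linf_def
    by (cases "(\<lambda>z. ereal \<bar>g z\<bar>) \<in> borel_measurable N")
      (auto simp: esssup_non_measurable esssup_zero_space top_ereal_def)
qed

lemma AE_abs_le_Linf:
  assumes "(\<lambda>z. ereal \<bar>g z\<bar>) \<in> borel_measurable N" and "AE z in N. \<bar>g z\<bar> \<le> B"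
  shows "AE z in N. \<bar>g z\<bar> \<le> Linf N g"
proof -
  have "esssup N (\<lambda>z. ereal \<bar>g z\<bar>) \<le> ereal B"
    using assms by (intro esssup_I) auto
  moreover have "AE z in N. ereal \<bar>g z\<bar> \<le> esssup N (\<lambda>z. ereal \<bar>g z\<bar>)"
    by (rule esssup_AE)
  ultimately show ?thesis unfolding Linf_def
    by (cases "esssup N (\<lambda>z. ereal \<bar>g z\<bar>)") (auto elim: eventually_mono)
qed

lemma sets_Collect_AE:
  assumes "sigma_finite_measure Y"
    and "{p \<in> space (X \<Otimes>\<^sub>M Y). \<Phi> (fst p) (snd p)} \<in> sets (X \<Otimes>\<^sub>M Y)"
  shows "{x \<in> space X. AE y in Y. \<Phi> x y} \<in> sets X"
proof -
  interpret sigma_finite_measure Y by fact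
  define S where "S = {p \<in> space (X \<Otimes>\<^sub>M Y). \<not> \<Phi> (fst p) (snd p)}"
  have S: "S \<in> sets (X \<Otimes>\<^sub>M Y)"
    unfolding S_def by (rule sets.sets_Collect_neg[OF assms(2)])
  have "{x \<in> space X. AE y in Y. \<Phi> x y} = {x \<in> space X. emeasure Y (Pair x -` S) = 0}"
  proof (intro Collect_cong conj_cong refl)
    fix x assume "x \<in> space X"
    then have "{y \<in> space Y. \<not> \<Phi> x y} = Pair x -` S"
      by (auto simp: S_def space_pair_measure)
    then show "(AE y in Y. \<Phi> x y) = (emeasure Y (Pair x -` S) = 0)"
      using AE_iff_measurable[OF sets_Pair1[OF S]] by blast
  qed
  also have "\<dots> \<in> sets X"
    using measurable_emeasure_Pair[OF S] by measurable
  finally show ?thesis .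
qed

section \<open>Finite differences\<close>

lemma repl_insert: "repl (insert i A) x y = repl A (x(i := y i)) y"
  by (auto simp: repl_def fun_eq_iff)

lemma repl_fun_upd: "i \<in> J \<Longrightarrow> repl J (x(i := v)) y = repl J x y"
  by (auto simp: repl_def fun_eq_iff)

lemma diff_op_insert:
  assumes "finite J" "i \<notin> J"
  shows "diff_op (insert i J) f x y = diff_op J f x y - diff_op J f (x(i := y i)) y"
proof -
  have inj: "inj_on (insert i) (Pow J)"
    using assms(2) by (auto simp: inj_on_def)
  have "diff_op (insert i J) f x y
      = diff_op J f x y + (\<Sum>A\<in>insert i ` Pow J. (-1) ^ card A * f (repl A x y))"
    unfolding diff_op_def Pow_insert using assms by (intro sum.union_disjoint) auto
  also have "(\<Sum>A\<in>insert i ` Pow J. (-1) ^ card A * f (repl A x y))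
      = (\<Sum>A\<in>Pow J. (-1) ^ card (insert i A) * f (repl (insert i A) x y))"
    by (rule sum.reindex[OF inj, unfolded comp_def])
  also have "\<dots> = - diff_op J f (x(i := y i)) y"
    unfolding diff_op_def sum_negf[symmetric]
  proof (rule sum.cong[OF refl])
    fix A assume "A \<in> Pow J"
    then have "finite A" "i \<notin> A" using assms finite_subset by auto
    then show "(-1) ^ card (insert i A) * f (repl (insert i A) x y)
        = - ((-1) ^ card A * f (repl A (x(i := y i)) y))"
      by (simp add: repl_insert)
  qed
  finally show ?thesis by simp
qed

lemma diff_op_cong:
  assumes "\<And>j. j \<in> J \<Longrightarrow> y j = y' j"
  shows "diff_op J f x y = diff_op J f x y'"
proof -
  have "repl A x y = repl A x y'" if "A \<in> Pow J" for A
    using assms that by (auto simp: repl_def fun_eq_iff)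
  then show ?thesis unfolding diff_op_def by (intro sum.cong) auto
qed

definition resample :: "nat set \<Rightarrow> nat set \<Rightarrow> (nat \<Rightarrow> 'a) \<times> (nat \<Rightarrow> 'a \<times> 'a) \<Rightarrow> nat \<Rightarrow> 'a" where
  "resample A J p = repl A (repl J (fst p) (\<lambda>j. fst (snd p j))) (\<lambda>j. snd (snd p j))"

text \<open>The function whose L-infinity norm is hdiff: z j plays the role of (X_j, X'_j) for j \<in> J.\<close>
definition diff_sample :: "((nat \<Rightarrow> 'a) \<Rightarrow> real) \<Rightarrow> nat set \<Rightarrow> (nat \<Rightarrow> 'a) \<Rightarrow> (nat \<Rightarrow> 'a \<times> 'a) \<Rightarrow> real" where
  "diff_sample f J x z = diff_op J f (repl J x (\<lambda>j. fst (z j))) (\<lambda>j. snd (z j))"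

lemma hdiff_eq_Linf_diff_sample: "hdiff M J f x = Linf (PiM J (\<lambda>j. M j \<Otimes>\<^sub>M M j)) (diff_sample f J x)"
  unfolding hdiff_def diff_sample_def ..

lemma diff_sample_eq_sum_resample:
  "diff_sample f J x z = (\<Sum>A\<in>Pow J. (-1) ^ card A * f (resample A J (x, z)))"
  by (simp add: diff_sample_def diff_op_def resample_def)

lemma diff_sample_fun_upd: "i \<in> J \<Longrightarrow> diff_sample f J (x(i := v)) = diff_sample f J x"
  by (simp add: diff_sample_def repl_fun_upd fun_eq_iff)

lemma hdiff_fun_upd: "i \<in> J \<Longrightarrow> hdiff M J f (x(i := v)) = hdiff M J f x"
  by (simp add: hdiff_eq_Linf_diff_sample diff_sample_fun_upd)

lemma diff_sample_insert:
  assumes "finite J" "i \<notin> J"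
  shows "diff_sample f (insert i J) x (z(i := (u, y)))
    = diff_sample f J (x(i := u)) z - diff_sample f J (x(i := y)) z"
proof -
  let ?x = "repl (insert i J) x (\<lambda>j. fst ((z(i := (u, y))) j))"
  let ?y = "\<lambda>j. snd ((z(i := (u, y))) j)"
  have "?x = repl J (x(i := u)) (\<lambda>j. fst (z j))" "?x(i := ?y i) = repl J (x(i := y)) (\<lambda>j. fst (z j))"
    using assms by (auto simp: repl_def fun_eq_iff)
  moreover have "diff_op J f x' ?y = diff_op J f x' (\<lambda>j. snd (z j))" for x'
    using assms by (intro diff_op_cong) auto
  ultimately show ?thesis
    unfolding diff_sample_def diff_op_insert[OF assms] by simp
qed

lemma htensor_nonneg: "0 \<le> htensor M k f x \<iota>"
  by (simp add: htensor_def Linf_nonneg hdiff_def)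

lemma htensor_increment_le:
  assumes "inj_on \<iota> {..<k} \<Longrightarrow> i \<notin> \<iota> ` {..<k} \<Longrightarrow>
    hdiff M (\<iota> ` {..<k}) f x \<le> hdiff M (\<iota> ` {..<k}) f (x(i := y)) + hdiff M (insert i (\<iota> ` {..<k})) f x"
  shows "htensor M k f x \<iota> - htensor M k f (x(i := y)) \<iota> \<le> htensor M (Suc k) f x (\<iota>(k := i))"
proof -
  have nonneg: "0 \<le> htensor M (Suc k) f x (\<iota>(k := i))" by (rule htensor_nonneg)
  show ?thesis
  proof (cases "inj_on \<iota> {..<k} \<and> i \<notin> \<iota> ` {..<k}")
    case True
    then have "inj_on (\<iota>(k := i)) {..<Suc k}"
      by (auto simp: inj_on_def less_Suc_eq)
    moreover have "(\<iota>(k := i)) ` {..<Suc k} = insert i (\<iota> ` {..<k})"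
      by (auto simp: lessThan_Suc image_def)
    ultimately show ?thesis using assms True by (simp add: htensor_def)
  next
    case False
    then show ?thesis using nonneg by (auto simp: htensor_def hdiff_fun_upd)
  qed
qed

section \<open>Operator norms of tensors\<close>

definition tensor_form :: "nat \<Rightarrow> nat \<Rightarrow> (nat \<Rightarrow> nat \<Rightarrow> real) \<Rightarrow> ((nat \<Rightarrow> nat) \<Rightarrow> real) \<Rightarrow> real" where
  "tensor_form n k v A = (\<Sum>\<iota>\<in>PiE {..<k} (\<lambda>_. {..<n}). (\<Prod>j<k. v j (\<iota> j)) * A \<iota>)"

definition unit_tuples :: "nat \<Rightarrow> nat \<Rightarrow> (nat \<Rightarrow> nat \<Rightarrow> real) set" where
  "unit_tuples n k = {v. \<forall>j<k. (\<Sum>i<n. (v j i)\<^sup>2) \<le> 1}"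

lemma opnorm_eq_Sup_tensor_form: "opnorm n k A = Sup ((\<lambda>v. tensor_form n k v A) ` unit_tuples n k)"
  unfolding opnorm_def tensor_form_def unit_tuples_def by (rule arg_cong[where f=Sup]) auto

lemma unit_tuples_abs_le_1:
  assumes "v \<in> unit_tuples n k" "j < k" "i < n"
  shows "\<bar>v j i\<bar> \<le> 1"
proof -
  have "(v j i)\<^sup>2 \<le> (\<Sum>i<n. (v j i)\<^sup>2)"
    using assms(3) by (intro member_le_sum) auto
  also have "\<dots> \<le> 1" using assms(1,2) by (auto simp: unit_tuples_def)
  finally show ?thesis by (simp add: abs_square_le_1)
qed

lemma abs_in_unit_tuples: "v \<in> unit_tuples n k \<Longrightarrow> (\<lambda>j i. \<bar>v j i\<bar>) \<in> unit_tuples n k"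
  by (simp add: unit_tuples_def)

lemma tensor_form_le_sum_abs:
  assumes "v \<in> unit_tuples n k"
  shows "tensor_form n k v A \<le> (\<Sum>\<iota>\<in>PiE {..<k} (\<lambda>_. {..<n}). \<bar>A \<iota>\<bar>)"
  unfolding tensor_form_def
proof (rule sum_mono)
  fix \<iota> assume "\<iota> \<in> PiE {..<k} (\<lambda>_. {..<n})"
  then have "\<bar>\<Prod>j<k. v j (\<iota> j)\<bar> \<le> 1"
    unfolding abs_prod using assms by (intro prod_le_1) (auto simp: unit_tuples_abs_le_1 PiE_iff)
  then show "(\<Prod>j<k. v j (\<iota> j)) * A \<iota> \<le> \<bar>A \<iota>\<bar>"
    by (metis abs_ge_self abs_mult abs_ge_zero mult_left_le_one_le order_trans)
qed

lemma bdd_above_tensor_form: "bdd_above ((\<lambda>v. tensor_form n k v A) ` unit_tuples n k)"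
  by (rule bdd_aboveI2) (rule tensor_form_le_sum_abs)

lemma tensor_form_le_opnorm: "v \<in> unit_tuples n k \<Longrightarrow> tensor_form n k v A \<le> opnorm n k A"
  unfolding opnorm_eq_Sup_tensor_form by (rule cSup_upper[OF imageI bdd_above_tensor_form])

lemma tensor_form_approx_opnorm:
  assumes "0 < e"
  obtains v where "v \<in> unit_tuples n k" "opnorm n k A - e < tensor_form n k v A"
proof -
  have "(\<lambda>_ _. 0) \<in> unit_tuples n k" by (simp add: unit_tuples_def)
  moreover have "opnorm n k A - e < Sup ((\<lambda>v. tensor_form n k v A) ` unit_tuples n k)"
    using assms unfolding opnorm_eq_Sup_tensor_form by simp
  ultimately show ?thesis
    using that less_cSup_iff[OF _ bdd_above_tensor_form] by blast
qed

lemma tensor_form_le_tensor_form_abs: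
  assumes "\<And>\<iota>. \<iota> \<in> PiE {..<k} (\<lambda>_. {..<n}) \<Longrightarrow> 0 \<le> A \<iota>"
  shows "tensor_form n k v A \<le> tensor_form n k (\<lambda>j i. \<bar>v j i\<bar>) A"
  unfolding tensor_form_def
proof (rule sum_mono)
  fix \<iota> assume "\<iota> \<in> PiE {..<k} (\<lambda>_. {..<n})"
  moreover have "(\<Prod>j<k. v j (\<iota> j)) \<le> (\<Prod>j<k. \<bar>v j (\<iota> j)\<bar>)"
    by (metis abs_ge_self abs_prod)
  ultimately show "(\<Prod>j<k. v j (\<iota> j)) * A \<iota> \<le> (\<Prod>j<k. \<bar>v j (\<iota> j)\<bar>) * A \<iota>"
    using assms by (intro mult_right_mono)
qed

lemma tensor_form_nonneg:
  "(\<And>j i. 0 \<le> w j i) \<Longrightarrow> (\<And>\<iota>. 0 \<le> A \<iota>) \<Longrightarrow> 0 \<le> tensor_form n k w A"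
  unfolding tensor_form_def by (intro sum_nonneg mult_nonneg_nonneg prod_nonneg) auto

lemma tensor_form_cong:
  "(\<And>j. j < k \<Longrightarrow> v j = v' j) \<Longrightarrow> tensor_form n k v A = tensor_form n k v' A"
  unfolding tensor_form_def by (intro sum.cong refl arg_cong2[where f="(*)"] prod.cong) auto

lemma tensor_form_Suc:
  "tensor_form n (Suc k) v A = (\<Sum>i<n. v k i * tensor_form n k v (\<lambda>\<iota>. A (\<iota>(k := i))))"
proof -
  have "tensor_form n (Suc k) v A
      = (\<Sum>p\<in>{..<n} \<times> PiE {..<k} (\<lambda>_. {..<n}).
           (\<Prod>j<Suc k. v j (((snd p)(k := fst p)) j)) * A ((snd p)(k := fst p)))"
    unfolding tensor_form_def lessThan_Suc PiE_insert_eq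
    by (subst sum.reindex[OF inj_combinator]) (auto simp: case_prod_beta')
  also have "\<dots> = (\<Sum>p\<in>{..<n} \<times> PiE {..<k} (\<lambda>_. {..<n}).
           v k (fst p) * ((\<Prod>j<k. v j (snd p j)) * A ((snd p)(k := fst p))))"
  proof (intro sum.cong refl)
    fix p :: "nat \<times> (nat \<Rightarrow> nat)"
    have "(\<Prod>j<k. v j (((snd p)(k := fst p)) j)) = (\<Prod>j<k. v j (snd p j))"
      by (intro prod.cong) auto
    then show "(\<Prod>j<Suc k. v j (((snd p)(k := fst p)) j)) * A ((snd p)(k := fst p))
        = v k (fst p) * ((\<Prod>j<k. v j (snd p j)) * A ((snd p)(k := fst p)))"
      by (simp add: prod.lessThan_Suc)
  qed
  also have "\<dots> = (\<Sum>i<n. \<Sum>\<iota>\<in>PiE {..<k} (\<lambda>_. {..<n}).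
           v k i * ((\<Prod>j<k. v j (\<iota> j)) * A (\<iota>(k := i))))"
    by (simp add: sum.cartesian_product case_prod_beta')
  also have "\<dots> = (\<Sum>i<n. v k i * tensor_form n k v (\<lambda>\<iota>. A (\<iota>(k := i))))"
    by (simp add: tensor_form_def sum_distrib_left)
  finally show ?thesis .
qed

text \<open>Contracting all but the last slot of a (k+1)-tensor against unit vectors gives a vector c
  whose length is a value of the (k+1)-linear form, with c normalised as the last unit vector.\<close>
lemma L2_set_contraction_le_opnorm:
  assumes w: "w \<in> unit_tuples n k"
  shows "L2_set (\<lambda>i. tensor_form n k w (\<lambda>\<iota>. A (\<iota>(k := i)))) {..<n} \<le> opnorm n (Suc k) A"
proof -
  define c where "c i = tensor_form n k w (\<lambda>\<iota>. A (\<iota>(k := i)))" for i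
  define L where "L = L2_set c {..<n}"
  show ?thesis
  proof (cases "L = 0")
    case True
    have "tensor_form n (Suc k) (\<lambda>_ _. 0) A = 0" by (simp add: tensor_form_def)
    moreover have "(\<lambda>_ _. 0) \<in> unit_tuples n (Suc k)" by (simp add: unit_tuples_def)
    ultimately show ?thesis
      using tensor_form_le_opnorm True unfolding L_def c_def by metis
  next
    case False
    then have L: "0 < L" using L2_set_nonneg[of c "{..<n}"] unfolding L_def by linarith
    have L2: "L\<^sup>2 = (\<Sum>i<n. (c i)\<^sup>2)"
      unfolding L_def L2_set_def by (simp add: sum_nonneg)
    define V where "V = w(k := (\<lambda>i. c i / L))"
    have "(\<Sum>i<n. (c i / L)\<^sup>2) = 1"
      using L by (simp add: power_divide sum_divide_distrib[symmetric] L2[symmetric])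
    then have V: "V \<in> unit_tuples n (Suc k)"
      using w by (auto simp: unit_tuples_def V_def less_Suc_eq)
    have "tensor_form n k V (\<lambda>\<iota>. A (\<iota>(k := i))) = c i" for i
      unfolding c_def V_def by (rule tensor_form_cong) simp
    then have "tensor_form n (Suc k) V A = (\<Sum>i<n. c i / L * c i)"
      unfolding tensor_form_Suc by (simp add: V_def)
    also have "\<dots> = L"
      using L by (simp add: sum_divide_distrib[symmetric] L2[symmetric] power2_eq_square[symmetric])
        (simp add: power2_eq_square)
    finally show ?thesis
      using tensor_form_le_opnorm[OF V, of A] unfolding L_def c_def by simp
  qed
qed

lemma hplus_opnorm_le_contraction:
  assumes w: "w \<in> unit_tuples n k" and w_nonneg: "\<And>j i. 0 \<le> w j i"
    and near_max: "opnorm n k (T x) - e \<le> tensor_form n k w (T x)" and e: "0 \<le> e"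
    and B_nonneg: "\<And>\<iota>. 0 \<le> B \<iota>"
    and incr: "AE y in M i. \<forall>\<iota>\<in>PiE {..<k} (\<lambda>_. {..<n}). T x \<iota> - T (x(i := y)) \<iota> \<le> B (\<iota>(k := i))"
  shows "hplus M i (\<lambda>z. opnorm n k (T z)) x \<le> tensor_form n k w (\<lambda>\<iota>. B (\<iota>(k := i))) + e"
  unfolding hplus_def
proof (rule Linf_le)
  let ?c = "tensor_form n k w (\<lambda>\<iota>. B (\<iota>(k := i)))"
  have c: "0 \<le> ?c" using w_nonneg B_nonneg by (rule tensor_form_nonneg)
  then show "0 \<le> ?c + e" using e by simp
  show "AE y in M i. \<bar>max 0 (opnorm n k (T x) - opnorm n k (T (x(i := y))))\<bar> \<le> ?c + e"
    using incr
  proof eventually_elim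
    case (elim y)
    have "tensor_form n k w (T x) - tensor_form n k w (T (x(i := y)))
        = (\<Sum>\<iota>\<in>PiE {..<k} (\<lambda>_. {..<n}). (\<Prod>j<k. w j (\<iota> j)) * (T x \<iota> - T (x(i := y)) \<iota>))"
      unfolding tensor_form_def by (simp add: sum_subtractf right_diff_distrib)
    also have "\<dots> \<le> ?c"
      unfolding tensor_form_def using elim w_nonneg
      by (intro sum_mono mult_left_mono prod_nonneg) auto
    finally have "opnorm n k (T x) - opnorm n k (T (x(i := y))) \<le> ?c + e"
      using near_max tensor_form_le_opnorm[OF w, of "T (x(i := y))"] by linarith
    then show ?case using c e by simp
  qed
qed

text \<open>The per-coordinate bounds are contractions of B against one near-optimal tuple w,
  so their Euclidean norm is controlled by L2_set_contraction_le_opnorm.\<close>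
lemma hplus_norm_opnorm_le:
  assumes T_nonneg: "\<And>\<iota>. \<iota> \<in> PiE {..<k} (\<lambda>_. {..<n}) \<Longrightarrow> 0 \<le> T x \<iota>"
    and B_nonneg: "\<And>\<iota>. 0 \<le> B \<iota>"
    and incr: "\<And>i \<iota>. i < n \<Longrightarrow> \<iota> \<in> PiE {..<k} (\<lambda>_. {..<n}) \<Longrightarrow>
      AE y in M i. T x \<iota> - T (x(i := y)) \<iota> \<le> B (\<iota>(k := i))"
  shows "hplus_norm M n (\<lambda>z. opnorm n k (T z)) x \<le> opnorm n (Suc k) B"
proof (rule field_le_epsilon)
  fix e0 :: real assume "0 < e0"
  define e where "e = e0 / (sqrt n + 1)"
  have "0 < sqrt n + 1" by (simp add: add_nonneg_pos)
  then have e: "0 < e" "sqrt n * e \<le> e0"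
    using \<open>0 < e0\<close> by (simp_all add: e_def divide_le_eq)
  obtain v where v: "v \<in> unit_tuples n k" "opnorm n k (T x) - e < tensor_form n k v (T x)"
    using tensor_form_approx_opnorm[OF e(1)] by blast
  define w where "w = (\<lambda>j i. \<bar>v j i\<bar>)"
  have w: "w \<in> unit_tuples n k" unfolding w_def by (rule abs_in_unit_tuples[OF v(1)])
  have near_max: "opnorm n k (T x) - e \<le> tensor_form n k w (T x)"
    using v(2) tensor_form_le_tensor_form_abs[of k n "T x" v] T_nonneg unfolding w_def by fastforce
  define c where "c i = tensor_form n k w (\<lambda>\<iota>. B (\<iota>(k := i)))" for i
  have "hplus M i (\<lambda>z. opnorm n k (T z)) x \<le> c i + e" if "i < n" for i
    unfolding c_def
  proof (rule hplus_opnorm_le_contraction[where B=B and T=T and x=x, OF w _ near_max])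
    show "AE y in M i. \<forall>\<iota>\<in>PiE {..<k} (\<lambda>_. {..<n}). T x \<iota> - T (x(i := y)) \<iota> \<le> B (\<iota>(k := i))"
      using incr[OF that] by (intro AE_finite_allI) (auto simp: finite_PiE)
  qed (use e B_nonneg in \<open>auto simp: w_def\<close>)
  then have "hplus_norm M n (\<lambda>z. opnorm n k (T z)) x \<le> L2_set (\<lambda>i. c i + e) {..<n}"
    unfolding hplus_norm_def L2_set_def
    by (intro real_sqrt_le_mono sum_mono power_mono) (auto simp: hplus_def Linf_nonneg)
  also have "\<dots> \<le> L2_set c {..<n} + L2_set (\<lambda>_. e) {..<n}"
    by (rule L2_set_triangle_ineq)
  also have "L2_set (\<lambda>_. e) {..<n} = sqrt n * e"
    using e by (simp add: L2_set_def real_sqrt_mult)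
  also have "L2_set c {..<n} \<le> opnorm n (Suc k) B"
    unfolding c_def by (rule L2_set_contraction_le_opnorm[OF w])
  finally show "hplus_norm M n (\<lambda>z. opnorm n k (T z)) x \<le> opnorm n (Suc k) B + e0"
    using e by linarith
qed

section \<open>Resampling coordinates of a product measure\<close>

text \<open>A map that keeps the coordinates outside J and draws those in J, independently and with the
  right marginals, from an auxiliary probability space N preserves the product measure.\<close>
lemma distr_PiM_pair_eqI:
  assumes M: "\<And>i. i \<in> I \<Longrightarrow> prob_space (M i)" and N: "prob_space N"
    and \<phi>: "\<phi> \<in> PiM I M \<Otimes>\<^sub>M N \<rightarrow>\<^sub>M PiM I M"
    and preimage: "\<And>K B. finite K \<Longrightarrow> K \<subseteq> I \<Longrightarrow> (\<And>k. k \<in> K \<Longrightarrow> B k \<in> sets (M k)) \<Longrightarrow>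
      \<exists>S\<in>sets N. \<phi> -` prod_emb I M K (PiE K B) \<inter> space (PiM I M \<Otimes>\<^sub>M N)
          = prod_emb I M (K - J) (PiE (K - J) B) \<times> S
        \<and> emeasure N S = (\<Prod>k\<in>K \<inter> J. emeasure (M k) (B k))"
  shows "distr (PiM I M \<Otimes>\<^sub>M N) (PiM I M) \<phi> = PiM I M"
proof (rule measure_eqI_PiM_infinite[symmetric])
  interpret N: prob_space N by fact
  interpret P: prob_space "PiM I M" using M by (rule prob_space_PiM)
  show "finite_measure (PiM I M)" using P.prob_space_axioms by (simp add: prob_space_def)
  fix K B assume K: "finite K" "K \<subseteq> I" and B: "\<And>i. i \<in> K \<Longrightarrow> B i \<in> sets (M i)"
  obtain S where S: "S \<in> sets N"
    and pre: "\<phi> -` prod_emb I M K (PiE K B) \<inter> space (PiM I M \<Otimes>\<^sub>M N)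
      = prod_emb I M (K - J) (PiE (K - J) B) \<times> S"
    and eS: "emeasure N S = (\<Prod>k\<in>K \<inter> J. emeasure (M k) (B k))"
    using preimage[OF K B] by blast
  have cyl: "prod_emb I M (K - J) (PiE (K - J) B) \<in> sets (PiM I M)"
    using K B by (intro sets_PiM_I) auto
  have "emeasure (distr (PiM I M \<Otimes>\<^sub>M N) (PiM I M) \<phi>) (prod_emb I M K (PiE K B))
      = emeasure (PiM I M \<Otimes>\<^sub>M N) (\<phi> -` prod_emb I M K (PiE K B) \<inter> space (PiM I M \<Otimes>\<^sub>M N))"
    using K B by (intro emeasure_distr \<phi> sets_PiM_I) auto
  also have "\<dots> = (\<Prod>k\<in>K - J. emeasure (M k) (B k)) * (\<Prod>k\<in>K \<inter> J. emeasure (M k) (B k))"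
    unfolding pre N.emeasure_pair_measure_Times[OF cyl S] eS
    using K B by (subst emeasure_PiM_emb[OF M]) auto
  also have "\<dots> = (\<Prod>k\<in>(K - J) \<union> (K \<inter> J). emeasure (M k) (B k))"
    using K by (intro prod.union_disjoint[symmetric]) auto
  also have "\<dots> = (\<Prod>k\<in>K. emeasure (M k) (B k))"
    by (simp add: Un_Diff_Int)
  also have "\<dots> = emeasure (PiM I M) (prod_emb I M K (PiE K B))"
    using K B by (intro emeasure_PiM_emb[symmetric] M) auto
  finally show "emeasure (PiM I M) (prod_emb I M K (PiE K B))
      = emeasure (distr (PiM I M \<Otimes>\<^sub>M N) (PiM I M) \<phi>) (prod_emb I M K (PiE K B))" ..
qed simp_all

locale indep_coords =
  fixes M :: "nat \<Rightarrow> 'a measure" and n :: nat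
  assumes prob_space_M: "\<And>i. i < n \<Longrightarrow> prob_space (M i)"
begin

abbreviation P :: "(nat \<Rightarrow> 'a) measure" where
  "P \<equiv> PiM {..<n} M"

text \<open>Q J is the joint law of the pairs (X_j, X'_j), j \<in> J.\<close>
abbreviation Q :: "nat set \<Rightarrow> (nat \<Rightarrow> 'a \<times> 'a) measure" where
  "Q J \<equiv> PiM J (\<lambda>j. M j \<Otimes>\<^sub>M M j)"

lemma prob_space_P: "prob_space P"
  by (intro prob_space_PiM prob_space_M) simp

lemma prob_space_Q: "J \<subseteq> {..<n} \<Longrightarrow> prob_space (Q J)"
  by (intro prob_space_PiM prob_space_pair prob_space_M) auto

lemma pair_sigma_finite_P_M: "i < n \<Longrightarrow> pair_sigma_finite P (M i)"
  by (simp add: pair_sigma_finite_def prob_space_imp_sigma_finite prob_space_P prob_space_M)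

lemma pair_sigma_finite_P_Q: "J \<subseteq> {..<n} \<Longrightarrow> pair_sigma_finite P (Q J)"
  by (simp add: pair_sigma_finite_def prob_space_imp_sigma_finite prob_space_P prob_space_Q)

lemma measurable_fun_upd_P: "i < n \<Longrightarrow> (\<lambda>(x, y). x(i := y)) \<in> P \<Otimes>\<^sub>M M i \<rightarrow>\<^sub>M P"
  using measurable_fun_upd[where I="{..<n}" and J="{..<n}" and i=i and M=M
      and f=fst and h=snd and N="P \<Otimes>\<^sub>M M i"]
  by (simp add: case_prod_beta' insert_absorb)

lemma distr_fun_upd_P:
  assumes i: "i < n"
  shows "distr (P \<Otimes>\<^sub>M M i) P (\<lambda>(x, y). x(i := y)) = P"
proof (rule distr_PiM_pair_eqI[where J="{i}"])
  show "prob_space (M i)" using i by (rule prob_space_M)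
  interpret Mi: prob_space "M i" using i by (rule prob_space_M)
  fix K B assume K: "finite K" "K \<subseteq> {..<n}" and B: "\<And>k. k \<in> K \<Longrightarrow> B k \<in> sets (M k)"
  have cyl: "prod_emb {..<n} M L (PiE L B) = PiE {..<n} (\<lambda>k. if k \<in> L then B k else space (M k))"
    if "L \<subseteq> K" for L
    using that K sets.sets_into_space[OF B] by (intro prod_emb_PiE) auto
  define S where "S = (if i \<in> K then B i else space (M i))"
  have "S \<in> sets (M i)" using B by (simp add: S_def)
  moreover have "(\<lambda>(x, y). x(i := y)) -` prod_emb {..<n} M K (PiE K B) \<inter> space (P \<Otimes>\<^sub>M M i)
      = prod_emb {..<n} M (K - {i}) (PiE (K - {i}) B) \<times> S"
    unfolding cyl[OF order_refl] cyl[OF Diff_subset] space_pair_measure space_PiM S_def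
    using i sets.sets_into_space[OF B] by (auto simp: PiE_iff extensional_def split: if_splits; blast)
  moreover have "emeasure (M i) S = (\<Prod>k\<in>K \<inter> {i}. emeasure (M k) (B k))"
    by (cases "i \<in> K") (simp_all add: S_def Mi.emeasure_space_1 Int_absorb1)
  ultimately show "\<exists>S\<in>sets (M i). (\<lambda>(x, y). x(i := y)) -` prod_emb {..<n} M K (PiE K B) \<inter> space (P \<Otimes>\<^sub>M M i)
      = prod_emb {..<n} M (K - {i}) (PiE (K - {i}) B) \<times> S
    \<and> emeasure (M i) S = (\<Prod>k\<in>K \<inter> {i}. emeasure (M k) (B k))" by blast
qed (use i in \<open>simp_all add: prob_space_M measurable_fun_upd_P\<close>)

lemma AE_fun_upd:
  assumes i: "i < n" and "AE x in P. \<Phi> x"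
  shows "AE x in P. AE y in M i. \<Phi> (x(i := y))"
proof -
  interpret pair_sigma_finite P "M i" using i by (rule pair_sigma_finite_P_M)
  have "AE p in P \<Otimes>\<^sub>M M i. \<Phi> ((\<lambda>(x, y). x(i := y)) p)"
    by (rule AE_distrD[OF measurable_fun_upd_P[OF i]]) (unfold distr_fun_upd_P[OF i], fact)
  then show ?thesis
    using AE_pair[where Q="\<lambda>p. \<Phi> ((\<lambda>(x, y). x(i := y)) p)"] by simp
qed

text \<open>The observed coordinate X_i may stand in for an independent copy, because X(i := u) with
  u independent has the law of X (distr_fun_upd_P).\<close>
lemma AE_self_component:
  assumes i: "i < n"
    and R_AE: "AE x in P. AE u in M i. R x u"
    and R_sets: "{p \<in> space (P \<Otimes>\<^sub>M M i). R (fst p) (snd p)} \<in> sets (P \<Otimes>\<^sub>M M i)"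
    and R_upd: "\<And>x u v. R (x(i := v)) u = R x u"
  shows "AE x in P. R x (x i)"
proof -
  interpret pair_sigma_finite P "M i" using i by (rule pair_sigma_finite_P_M)
  have diag: "(\<lambda>x. (x, x i)) \<in> P \<rightarrow>\<^sub>M P \<Otimes>\<^sub>M M i"
    using i by (intro measurable_Pair measurable_ident_sets measurable_component_singleton) auto
  have "{x \<in> space P. R x (x i)} = (\<lambda>x. (x, x i)) -` {p \<in> space (P \<Otimes>\<^sub>M M i). R (fst p) (snd p)} \<inter> space P"
    using measurable_space[OF diag] by auto
  also have "\<dots> \<in> sets P"
    using measurable_sets[OF diag R_sets] .
  finally have sets: "{x \<in> space P. R x (x i)} \<in> sets P" .
  have "AE p in P \<Otimes>\<^sub>M M i. R (fst p) (snd p)"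
    using R_AE AE_pair_iff[OF R_sets] by simp
  then have "AE p in P \<Otimes>\<^sub>M M i. R ((\<lambda>(x, y). x(i := y)) p) ((\<lambda>(x, y). x(i := y)) p i)"
    by (simp add: case_prod_beta' R_upd)
  then have "AE x in distr (P \<Otimes>\<^sub>M M i) P (\<lambda>(x, y). x(i := y)). R x (x i)"
    by (subst AE_distr_iff[OF measurable_fun_upd_P[OF i] sets])
  then show ?thesis unfolding distr_fun_upd_P[OF i] .
qed

lemma measurable_resample:
  assumes "A \<subseteq> J" "J \<subseteq> {..<n}"
  shows "resample A J \<in> P \<Otimes>\<^sub>M Q J \<rightarrow>\<^sub>M P"
proof (rule measurable_PiM_single')
  fix j assume j: "j \<in> {..<n}"
  consider "j \<in> A" | "j \<in> J - A" | "j \<notin> J" using assms by blast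
  then show "(\<lambda>p. resample A J p j) \<in> P \<Otimes>\<^sub>M Q J \<rightarrow>\<^sub>M M j"
  proof cases
    case 1
    then have jJ: "j \<in> J" using assms by blast
    have eq: "(\<lambda>p. resample A J p j) = (\<lambda>p. snd (snd p j))"
      using 1 by (simp add: resample_def repl_def)
    show ?thesis
      unfolding eq by (rule measurable_compose[OF measurable_compose[OF measurable_snd
          measurable_component_singleton[OF jJ]] measurable_snd])
  next
    case 2
    then have jJ: "j \<in> J" by blast
    have eq: "(\<lambda>p. resample A J p j) = (\<lambda>p. fst (snd p j))"
      using 2 by (simp add: resample_def repl_def)
    show ?thesis
      unfolding eq by (rule measurable_compose[OF measurable_compose[OF measurable_snd
          measurable_component_singleton[OF jJ]] measurable_fst])
  next
    case 3
    then have eq: "(\<lambda>p. resample A J p j) = (\<lambda>p. fst p j)"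
      using assms by (auto simp: resample_def repl_def fun_eq_iff)
    show ?thesis
      unfolding eq by (rule measurable_compose[OF measurable_fst measurable_component_singleton[OF j]])
  qed
next
  show "resample A J \<in> space (P \<Otimes>\<^sub>M Q J) \<rightarrow> (\<Pi>\<^sub>E i\<in>{..<n}. space (M i))"
    using assms
    by (auto simp: resample_def repl_def space_pair_measure space_PiM PiE_iff extensional_def mem_Times_iff
        split: if_splits; blast)
qed

lemma distr_resample:
  assumes AJ: "A \<subseteq> J" and J: "J \<subseteq> {..<n}"
  shows "distr (P \<Otimes>\<^sub>M Q J) P (resample A J) = P"
proof (rule distr_PiM_pair_eqI[where J=J])
  fix K B assume K: "finite K" "K \<subseteq> {..<n}" and B: "\<And>k. k \<in> K \<Longrightarrow> B k \<in> sets (M k)"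
  define B2 where "B2 j = (if j \<in> A then space (M j) \<times> B j else B j \<times> space (M j))" for j
  define S where "S = prod_emb J (\<lambda>j. M j \<Otimes>\<^sub>M M j) (K \<inter> J) (PiE (K \<inter> J) B2)"
  have B2: "B2 j \<in> sets (M j \<Otimes>\<^sub>M M j)" if "j \<in> K" for j
    using B that by (auto simp: B2_def)
  have B2_space: "B2 j \<subseteq> space (M j \<Otimes>\<^sub>M M j)" if "j \<in> K \<inter> J" for j
    using B2 that by (auto dest: sets.sets_into_space)
  have cyl: "prod_emb {..<n} M L (PiE L B) = PiE {..<n} (\<lambda>k. if k \<in> L then B k else space (M k))"
    if "L \<subseteq> K" for L
    using that K sets.sets_into_space[OF B] by (intro prod_emb_PiE) auto
  have cyl2: "prod_emb J (\<lambda>j. M j \<Otimes>\<^sub>M M j) (K \<inter> J) (PiE (K \<inter> J) B2)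
      = PiE J (\<lambda>j. if j \<in> K \<inter> J then B2 j else space (M j \<Otimes>\<^sub>M M j))"
    using B2_space by (intro prod_emb_PiE) auto
  have "S \<in> sets (Q J)"
    unfolding S_def using K B2 by (intro sets_PiM_I) auto
  moreover have "resample A J -` prod_emb {..<n} M K (PiE K B) \<inter> space (P \<Otimes>\<^sub>M Q J)
      = prod_emb {..<n} M (K - J) (PiE (K - J) B) \<times> S"
    unfolding S_def cyl[OF order_refl] cyl[OF Diff_subset] cyl2
      space_pair_measure space_PiM
    using AJ J sets.sets_into_space[OF B]
    by (auto simp: resample_def repl_def PiE_iff extensional_def B2_def mem_Times_iff split: if_splits; blast)
  moreover have "emeasure (Q J) S = (\<Prod>k\<in>K \<inter> J. emeasure (M k) (B k))"
  proof -
    have "emeasure (Q J) S = (\<Prod>j\<in>K \<inter> J. emeasure (M j \<Otimes>\<^sub>M M j) (B2 j))"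
      unfolding S_def using K J B2 by (intro emeasure_PiM_emb prob_space_pair prob_space_M) auto
    also have "\<dots> = (\<Prod>k\<in>K \<inter> J. emeasure (M k) (B k))"
    proof (rule prod.cong[OF refl])
      fix j assume j: "j \<in> K \<inter> J"
      interpret Mj: prob_space "M j" using j K by (intro prob_space_M) auto
      show "emeasure (M j \<Otimes>\<^sub>M M j) (B2 j) = emeasure (M j) (B j)"
        using B j by (auto simp: B2_def Mj.emeasure_pair_measure_Times Mj.emeasure_space_1)
    qed
    finally show ?thesis .
  qed
  ultimately show "\<exists>S\<in>sets (Q J). resample A J -` prod_emb {..<n} M K (PiE K B) \<inter> space (P \<Otimes>\<^sub>M Q J)
      = prod_emb {..<n} M (K - J) (PiE (K - J) B) \<times> S
    \<and> emeasure (Q J) S = (\<Prod>k\<in>K \<inter> J. emeasure (M k) (B k))" by blast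
qed (use assms in \<open>simp_all add: prob_space_M prob_space_Q measurable_resample\<close>)

end

section \<open>Differences of a bounded measurable function\<close>

locale bounded_fun_on_coords = indep_coords +
  fixes f :: "(nat \<Rightarrow> 'a) \<Rightarrow> real" and C :: real
  assumes f_measurable [measurable]: "f \<in> borel_measurable P"
    and f_bounded: "AE x in P. \<bar>f x\<bar> \<le> C"
begin

lemma measurable_diff_sample:
  assumes J: "J \<subseteq> {..<n}"
  shows "(\<lambda>p. diff_sample f J (fst p) (snd p)) \<in> borel_measurable (P \<Otimes>\<^sub>M Q J)"
proof -
  have "(\<lambda>p. f (resample A J p)) \<in> borel_measurable (P \<Otimes>\<^sub>M Q J)" if "A \<in> Pow J" for A
    using measurable_compose[OF measurable_resample f_measurable] that J by auto
  then show ?thesis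
    unfolding diff_sample_eq_sum_resample by (auto intro!: borel_measurable_sum)
qed

lemma measurable_diff_sample_section:
  "J \<subseteq> {..<n} \<Longrightarrow> x \<in> space P \<Longrightarrow> diff_sample f J x \<in> borel_measurable (Q J)"
  using measurable_Pair2[OF measurable_diff_sample] by simp

lemma measurable_hdiff:
  assumes J: "J \<subseteq> {..<n}"
  shows "hdiff M J f \<in> borel_measurable P"
proof -
  define E where "E x = esssup (Q J) (\<lambda>z. ereal \<bar>diff_sample f J x z\<bar>)" for x
  have [measurable]: "(\<lambda>p. diff_sample f J (fst p) (snd p)) \<in> borel_measurable (P \<Otimes>\<^sub>M Q J)"
    using J by (rule measurable_diff_sample)
  have "E \<in> borel_measurable P"
  proof (rule borel_measurableI_le)
    fix c
    have "{x \<in> space P. E x \<le> c} = {x \<in> space P. AE z in Q J. ereal \<bar>diff_sample f J x z\<bar> \<le> c}"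
    proof (intro Collect_cong conj_cong refl)
      fix x assume "x \<in> space P"
      then have "(\<lambda>z. ereal \<bar>diff_sample f J x z\<bar>) \<in> borel_measurable (Q J)"
        using measurable_diff_sample_section[OF J] by measurable
      then show "(E x \<le> c) = (AE z in Q J. ereal \<bar>diff_sample f J x z\<bar> \<le> c)"
        unfolding E_def using esssup_AE[of "\<lambda>z. ereal \<bar>diff_sample f J x z\<bar>" "Q J"]
        by (auto intro: esssup_I elim: eventually_mono)
    qed
    also have "\<dots> \<in> sets P"
      using J by (intro sets_Collect_AE prob_space_imp_sigma_finite prob_space_Q) measurable
    finally show "{x \<in> space P. E x \<le> c} \<in> sets P" .
  qed
  moreover have "hdiff M J f = (\<lambda>x. real_of_ereal (E x))"
    by (simp add: fun_eq_iff hdiff_eq_Linf_diff_sample Linf_def E_def)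
  ultimately show ?thesis by simp
qed

lemma AE_diff_sample_bounded:
  assumes J: "J \<subseteq> {..<n}"
  shows "AE x in P. AE z in Q J. \<bar>diff_sample f J x z\<bar> \<le> 2 ^ card J * C"
proof -
  interpret pair_sigma_finite P "Q J" using J by (rule pair_sigma_finite_P_Q)
  have "AE p in P \<Otimes>\<^sub>M Q J. \<bar>f (resample A J p)\<bar> \<le> C" if "A \<in> Pow J" for A
  proof (rule AE_distrD[OF measurable_resample])
    have AJ: "A \<subseteq> J" using that by simp
    show "AE x in distr (P \<Otimes>\<^sub>M Q J) P (resample A J). \<bar>f x\<bar> \<le> C"
      unfolding distr_resample[OF AJ J] by (rule f_bounded)
  qed (use that J in auto)
  then have "AE p in P \<Otimes>\<^sub>M Q J. \<forall>A\<in>Pow J. \<bar>f (resample A J p)\<bar> \<le> C"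
    using J finite_subset by (intro AE_finite_allI) auto
  then have "AE x in P. AE z in Q J. \<forall>A\<in>Pow J. \<bar>f (resample A J (x, z))\<bar> \<le> C"
    by (rule AE_pair)
  then show ?thesis
  proof eventually_elim
    case (elim x)
    then show ?case
    proof eventually_elim
      case (elim z)
      have "\<bar>diff_sample f J x z\<bar> \<le> (\<Sum>A\<in>Pow J. \<bar>(-1) ^ card A * f (resample A J (x, z))\<bar>)"
        unfolding diff_sample_eq_sum_resample by (rule sum_abs)
      also have "\<dots> \<le> of_nat (card (Pow J)) * C"
        using elim by (intro sum_bounded_above) (simp add: abs_mult)
      also have "\<dots> = 2 ^ card J * C"
        using finite_subset[OF J] by (simp add: card_Pow)
      finally show ?case .
    qed
  qed
qed

lemma AE_diff_sample_le_hdiff: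
  assumes J: "J \<subseteq> {..<n}"
  shows "AE x in P. AE z in Q J. \<bar>diff_sample f J x z\<bar> \<le> hdiff M J f x"
  using AE_diff_sample_bounded[OF J] AE_space
proof eventually_elim
  case (elim x)
  then have "(\<lambda>z. ereal \<bar>diff_sample f J x z\<bar>) \<in> borel_measurable (Q J)"
    using measurable_diff_sample_section[OF J] by measurable
  then show ?case
    unfolding hdiff_eq_Linf_diff_sample using elim(1) by (rule AE_abs_le_Linf)
qed

lemma AE_diff_sample_fresh_pair_le_hdiff:
  assumes i: "i < n" and J: "J \<subseteq> {..<n}"
  shows "AE x in P. AE u in M i. AE y in M i. AE z in Q J.
    \<bar>diff_sample f (insert i J) x (z(i := (u, y)))\<bar> \<le> hdiff M (insert i J) f x"
proof -
  define K where "K = insert i J"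
  have K: "K \<subseteq> {..<n}" using i J by (simp add: K_def)
  interpret Mi: prob_space "M i" using i by (rule prob_space_M)
  interpret MM: pair_sigma_finite "M i" "M i"
    by (simp add: pair_sigma_finite_def prob_space_imp_sigma_finite Mi.prob_space_axioms)
  interpret MMQ: pair_sigma_finite "M i \<Otimes>\<^sub>M M i" "Q J"
    using J by (simp add: pair_sigma_finite_def prob_space_imp_sigma_finite prob_space_Q
        prob_space_pair Mi.prob_space_axioms)
  have upd: "(\<lambda>(p, z). z(i := p)) \<in> (M i \<Otimes>\<^sub>M M i) \<Otimes>\<^sub>M Q J \<rightarrow>\<^sub>M Q K"
    using measurable_fun_upd[where I=K and J=J and i=i and f=snd and h=fst]
    by (simp add: K_def case_prod_beta')
  have distr_upd: "distr ((M i \<Otimes>\<^sub>M M i) \<Otimes>\<^sub>M Q J) (Q K) (\<lambda>(p, z). z(i := p)) = Q K"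
    unfolding K_def using i J by (intro distr_pair_PiM_eq_PiM prob_space_pair prob_space_M) auto
  show ?thesis
    using AE_diff_sample_le_hdiff[OF K] unfolding K_def[symmetric]
  proof eventually_elim
    case (elim x)
    then have "AE q in (M i \<Otimes>\<^sub>M M i) \<Otimes>\<^sub>M Q J.
        \<bar>diff_sample f K x ((\<lambda>(p, z). z(i := p)) q)\<bar> \<le> hdiff M K f x"
      by (intro AE_distrD[OF upd]) (simp only: distr_upd)
    from MMQ.AE_pair[OF this]
    have "AE p in M i \<Otimes>\<^sub>M M i. AE z in Q J. \<bar>diff_sample f K x (z(i := p))\<bar> \<le> hdiff M K f x"
      by simp
    from MM.AE_pair[OF this] show ?case by simp
  qed
qed

lemma sets_AE_diff_sample_fresh_pair_le_hdiff:
  assumes i: "i < n" and J: "J \<subseteq> {..<n}"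
  shows "{p \<in> space (P \<Otimes>\<^sub>M M i). AE y in M i. AE z in Q J.
      \<bar>diff_sample f (insert i J) (fst p) (z(i := (snd p, y)))\<bar> \<le> hdiff M (insert i J) f (fst p)}
    \<in> sets (P \<Otimes>\<^sub>M M i)"
proof -
  define K where "K = insert i J"
  have K: "K \<subseteq> {..<n}" using i J by (simp add: K_def)
  have [measurable]: "(\<lambda>r. hdiff M K f (fst (fst (fst r)))) \<in> borel_measurable (((P \<Otimes>\<^sub>M M i) \<Otimes>\<^sub>M M i) \<Otimes>\<^sub>M Q J)"
    using measurable_hdiff[OF K] by measurable
  have "(\<lambda>r. (fst (fst (fst r)), (snd r)(i := (snd (fst (fst r)), snd (fst r)))))
      \<in> ((P \<Otimes>\<^sub>M M i) \<Otimes>\<^sub>M M i) \<Otimes>\<^sub>M Q J \<rightarrow>\<^sub>M P \<Otimes>\<^sub>M Q K"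
    by (intro measurable_Pair measurable_fun_upd[where J=J]) (auto simp: K_def)
  from measurable_compose[OF this measurable_diff_sample[OF K]]
  have [measurable]: "(\<lambda>r. diff_sample f K (fst (fst (fst r))) ((snd r)(i := (snd (fst (fst r)), snd (fst r)))))
      \<in> borel_measurable (((P \<Otimes>\<^sub>M M i) \<Otimes>\<^sub>M M i) \<Otimes>\<^sub>M Q J)"
    by simp
  have "{q \<in> space ((P \<Otimes>\<^sub>M M i) \<Otimes>\<^sub>M M i). AE z in Q J.
      \<bar>diff_sample f K (fst (fst q)) (z(i := (snd (fst q), snd q)))\<bar> \<le> hdiff M K f (fst (fst q))}
      \<in> sets ((P \<Otimes>\<^sub>M M i) \<Otimes>\<^sub>M M i)"
    using J by (intro sets_Collect_AE prob_space_imp_sigma_finite prob_space_Q) measurable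
  then show ?thesis
    unfolding K_def by (rule sets_Collect_AE[OF prob_space_imp_sigma_finite[OF prob_space_M[OF i]]])
qed

text \<open>By AE_self_component, the fresh copy u of X_i may be taken to be the observed X_i.\<close>
lemma AE_diff_sample_insert_le_hdiff:
  assumes i: "i < n" and J: "J \<subseteq> {..<n}"
  shows "AE x in P. AE y in M i. AE z in Q J.
    \<bar>diff_sample f (insert i J) x (z(i := (x i, y)))\<bar> \<le> hdiff M (insert i J) f x"
proof -
  define R where "R x u \<longleftrightarrow> (AE y in M i. AE z in Q J.
    \<bar>diff_sample f (insert i J) x (z(i := (u, y)))\<bar> \<le> hdiff M (insert i J) f x)" for x u
  have "AE x in P. R x (x i)"
  proof (rule AE_self_component[where R=R, OF i])
    show "AE x in P. AE u in M i. R x u"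
      unfolding R_def by (rule AE_diff_sample_fresh_pair_le_hdiff[OF i J])
    show "{p \<in> space (P \<Otimes>\<^sub>M M i). R (fst p) (snd p)} \<in> sets (P \<Otimes>\<^sub>M M i)"
      unfolding R_def by (rule sets_AE_diff_sample_fresh_pair_le_hdiff[OF i J])
    show "R (x(i := v)) u = R x u" for x u v
      by (simp add: R_def diff_sample_fun_upd hdiff_fun_upd)
  qed
  then show ?thesis by (simp add: R_def)
qed

text \<open>Since (Id - T_i) maps the J-difference to the (J+i)-difference, resampling X_i changes
  h_J f by at most h_{J+i} f.\<close>
lemma AE_hdiff_le_hdiff_fun_upd:
  assumes i: "i < n" and J: "J \<subseteq> {..<n}" and iJ: "i \<notin> J"
  shows "AE x in P. AE y in M i. hdiff M J f x \<le> hdiff M J f (x(i := y)) + hdiff M (insert i J) f x"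
  using AE_fun_upd[OF i AE_diff_sample_le_hdiff[OF J]] AE_diff_sample_insert_le_hdiff[OF i J]
proof eventually_elim
  case (elim x)
  then show ?case
  proof eventually_elim
    case (elim y)
    then have "AE z in Q J. \<bar>diff_sample f J x z\<bar> \<le> hdiff M J f (x(i := y)) + hdiff M (insert i J) f x"
    proof eventually_elim
      case (elim z)
      have "diff_sample f J x z = diff_sample f J (x(i := y)) z + diff_sample f (insert i J) x (z(i := (x i, y)))"
        using diff_sample_insert[OF finite_subset[OF J] iJ, of f x z "x i" y] by simp
      then show ?case using elim by linarith
    qed
    then show ?case
      unfolding hdiff_eq_Linf_diff_sample[of M J f x]
      by (intro Linf_le add_nonneg_nonneg) (simp_all add: hdiff_def Linf_nonneg)
  qed
qed

lemma AE_htensor_increment: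
  assumes i: "i < n" and \<iota>: "\<iota> \<in> PiE {..<k} (\<lambda>_. {..<n})"
  shows "AE x in P. AE y in M i.
    htensor M k f x \<iota> - htensor M k f (x(i := y)) \<iota> \<le> htensor M (Suc k) f x (\<iota>(k := i))"
proof (cases "inj_on \<iota> {..<k} \<and> i \<notin> \<iota> ` {..<k}")
  case True
  have "\<iota> ` {..<k} \<subseteq> {..<n}" using \<iota> by (auto simp: PiE_iff)
  with True have "AE x in P. AE y in M i. hdiff M (\<iota> ` {..<k}) f x
      \<le> hdiff M (\<iota> ` {..<k}) f (x(i := y)) + hdiff M (insert i (\<iota> ` {..<k})) f x"
    by (intro AE_hdiff_le_hdiff_fun_upd[OF i]) auto
  then show ?thesis
  proof eventually_elim
    case (elim x)
    then show ?case by eventually_elim (rule htensor_increment_le)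
  qed
next
  case False
  then show ?thesis by (intro AE_I2) (auto intro: htensor_increment_le)
qed

end

theorem lemma3p2:
  fixes M :: "nat \<Rightarrow> 'a measure" and n d :: nat and f :: "(nat \<Rightarrow> 'a) \<Rightarrow> real"
  assumes "\<And>i. i < n \<Longrightarrow> prob_space (M i)"
    and "f \<in> borel_measurable (PiM {..<n} M)"
    and "\<exists>C. AE x in PiM {..<n} M. \<bar>f x\<bar> \<le> C"
    and "2 \<le> d"
  shows "AE x in PiM {..<n} M.
           hplus_norm M n (\<lambda>z. opnorm n (d - 1) (htensor M (d - 1) f z)) x
             \<le> opnorm n d (htensor M d f x)"
proof -
  obtain C where "AE x in PiM {..<n} M. \<bar>f x\<bar> \<le> C" using assms(3) by blast
  then interpret bounded_fun_on_coords M n f C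
    using assms(1,2)
    by (simp add: bounded_fun_on_coords_def bounded_fun_on_coords_axioms_def indep_coords_def)
  define k where "k = d - 1"
  have d: "d = Suc k" using assms(4) by (simp add: k_def)
  have "AE x in P. \<forall>i\<in>{..<n}. \<forall>\<iota>\<in>PiE {..<k} (\<lambda>_. {..<n}). AE y in M i.
    htensor M k f x \<iota> - htensor M k f (x(i := y)) \<iota> \<le> htensor M (Suc k) f x (\<iota>(k := i))"
    by (intro AE_finite_allI AE_htensor_increment) (simp_all add: finite_PiE)
  then show ?thesis
    unfolding d diff_Suc_1
  proof eventually_elim
    case (elim x)
    then show ?case by (intro hplus_norm_opnorm_le) (simp_all add: htensor_nonneg)
  qed
qed

end
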